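(* Let $T>0$, $B=e_3$ constant, and let $E:[0,T]\times\mathbb{R}^2\to\mathbb{R}^2$ be bounded and Lipschitz. For $\Delta t>0$, $\varepsilon>0$ set $t^n=n\Delta t$, $\lambda=\Delta t/\varepsilon^2$, and given $(x^0,v^0)$ define $(x^n,v^n)$ by $$\varepsilon\frac{x^{n+1}-x^n}{\Delta t}=v^{n+1},\qquad \varepsilon\frac{v^{n+1}-v^n}{\Delta t}=\frac1\varepsilon v^{n+1}\wedge e_3+E(t^n,x^n),$$ and $(y^n)$ by the modified initial datum $y^0=x^0+\varepsilon\big(v^0\wedge e_3+\varepsilon E(t^0,x^0)\big)$ and $\dfrac{y^{n+1}-y^n}{\Delta t}=E(t^n,y^n)\wedge e_3$. Then there exist $C>0$ and $\lambda_0>0$ depending only on $E$ and $T$ such that whenever $0<\Delta t\le1$ and $\lambda\ge\lambda_0$, for all $n\ge1$ with $t^n\le T$, $$\|x^n-y^n\|\le\frac{C\,\Delta t}{\lambda}\Big[1+\Big(\frac1\lambda+\Delta t\Big)\Big\|\frac{v^0}{\varepsilon}-E(t^0,x^0)\wedge e_3\Big\|\Big].$$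
   Context: Vectors of $\mathbb{R}^2$ are identified with vectors $(w_1,w_2,0)$ of $\mathbb{R}^3$, $e_3=(0,0,1)$, and $\wedge$ is the cross product; thus for $w\in\mathbb{R}^2$, $w\wedge e_3=(w_2,-w_1)\in\mathbb{R}^2$. *)

theory Defs
  imports "HOL-Analysis.Analysis"
begin

text \<open>Cross product with e3 for planar vectors: w wedge e3 = (w2, -w1).\<close>
definition wedge_e3 :: "real^2 \<Rightarrow> real^2" where
  "wedge_e3 w = (\<chi> i. if i = 1 then w $ 2 else - (w $ 1))"

end

theory Submission
  imports Defs
begin

text \<open>Write \<open>w = v / eps\<close> for the scaled velocity. The guiding center
  \<open>x + eps (v \<wedge> e3)\<close> obeys exactly the explicit scheme defining \<open>y\<close>, except that
  \<open>E\<close> is evaluated at \<open>x\<close> instead; it starts at distance \<open>eps\<^sup>2 \<parallel>E\<parallel>\<close> from \<open>y\<close>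
  and stays at distance \<open>eps\<^sup>2 \<parallel>w\<parallel>\<close> from \<open>x\<close>. The implicit treatment of the stiff
  Lorentz term contracts \<open>w\<close> towards \<open>E \<wedge> e3\<close> by the factor \<open>1 / \<lambda>\<close> in every step,
  so after the first step \<open>\<parallel>w\<parallel> \<le> 3 \<parallel>E\<parallel>\<^sub>\<infinity> + \<parallel>w 0 - E \<wedge> e3\<parallel> / \<lambda>\<close>. A discrete
  Gronwall argument for the Lipschitz field then bounds \<open>x - y\<close> by a multiple of
  \<open>eps\<^sup>2 = \<Delta>t / \<lambda>\<close>.\<close>

lemma wedge_e3_add: "wedge_e3 (a + b) = wedge_e3 a + wedge_e3 b"
  by (simp add: wedge_e3_def vec_eq_iff)

lemma wedge_e3_diff: "wedge_e3 (a - b) = wedge_e3 a - wedge_e3 b"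
  by (simp add: wedge_e3_def vec_eq_iff)

lemma wedge_e3_scaleR: "wedge_e3 (c *\<^sub>R a) = c *\<^sub>R wedge_e3 a"
  by (simp add: wedge_e3_def vec_eq_iff)

lemma wedge_e3_wedge_e3: "wedge_e3 (wedge_e3 a) = - a"
  by (simp add: wedge_e3_def vec_eq_iff forall_2)

lemma norm_vec2_squared: "(norm (a :: real^2))\<^sup>2 = (a $ 1)\<^sup>2 + (a $ 2)\<^sup>2"
  by (simp add: norm_vec_def L2_set_def sum_2)

lemma norm_wedge_e3: "norm (wedge_e3 a) = norm a"
proof -
  have "(norm (wedge_e3 a))\<^sup>2 = (norm a)\<^sup>2"
    by (simp add: norm_vec2_squared wedge_e3_def)
  then show ?thesis by (simp add: power2_eq_iff_nonneg)
qed

text \<open>Since \<open>q\<close> and \<open>wedge_e3 q\<close> are orthogonal of equal length,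
  \<open>norm (q - lam *\<^sub>R wedge_e3 q) = sqrt (1 + lam\<^sup>2) * norm q\<close>.\<close>
lemma wedge_e3_resolvent_norm_le:
  assumes "q - lam *\<^sub>R wedge_e3 q = p" and "0 \<le> lam"
  shows "lam * norm q \<le> norm p"
proof -
  have p: "p $ 1 = q $ 1 - lam * q $ 2" "p $ 2 = q $ 2 + lam * q $ 1"
    using assms(1)[symmetric] by (simp_all add: wedge_e3_def)
  have "(norm p)\<^sup>2 = (1 + lam\<^sup>2) * (norm q)\<^sup>2"
    unfolding norm_vec2_squared p by (simp add: power2_eq_square algebra_simps)
  then have "(lam * norm q)\<^sup>2 \<le> (norm p)\<^sup>2"
    by (simp add: power_mult_distrib algebra_simps)
  then show ?thesis
    using assms(2) by (meson norm_ge_zero power2_le_imp_le)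
qed

lemma one_plus_power_le_exp:
  fixes a :: real
  assumes "0 \<le> a"
  shows "(1 + a) ^ n \<le> exp (real n * a)"
proof -
  have "(1 + a) ^ n \<le> exp a ^ n"
    using assms exp_ge_add_one_self[of a] by (intro power_mono) auto
  then show ?thesis
    by (simp add: exp_of_nat_mult)
qed

lemma contracting_recursion_bound:
  fixes a :: "nat \<Rightarrow> real"
  assumes step: "\<And>k. k < N \<Longrightarrow> a (Suc k) \<le> (a k + M) / lam + M"
    and init: "a 0 \<le> u + M"
    and lam: "2 \<le> lam" and M: "0 \<le> M" and u: "0 \<le> u"
    and "k < N"
  shows "a (Suc k) \<le> 3 * M + u / lam"
  using \<open>k < N\<close>
proof (induction k)
  have half: "c / lam \<le> c / 2" if "0 \<le> c" for c
    using that lam by (intro frac_le) auto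
  {
    case 0
    have "(a 0 + M) / lam \<le> (u + 2 * M) / lam"
      using init lam by (simp add: divide_right_mono)
    then have "a 1 \<le> u / lam + 2 * M / lam + M"
      using step[OF 0] by (simp add: add_divide_distrib)
    then show ?case
      using half[of "2 * M"] M by simp
  next
    case (Suc k)
    have "(a (Suc k) + M) / lam \<le> (4 * M + u / lam) / lam"
      using Suc lam by (simp add: divide_right_mono)
    then have "a (Suc (Suc k)) \<le> 4 * M / lam + u / lam / lam + M"
      using step[OF Suc.prems] by (simp add: add_divide_distrib)
    moreover have "u / lam / lam \<le> u / lam"
    proof -
      have u_lam: "0 \<le> u / lam"
        using u lam by simp
      show ?thesis
        using half[OF u_lam] u_lam by argo
    qed
    ultimately show ?case
      using half[of "4 * M"] M by simp
  }
qed

lemma discrete_gronwall: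
  fixes a b :: "nat \<Rightarrow> real"
  assumes step: "\<And>k. k < n \<Longrightarrow> a (Suc k) \<le> P * a k + b k"
    and P: "1 \<le> P" and b_nonneg: "\<And>k. 0 \<le> b k"
  shows "a n \<le> P ^ n * (a 0 + (\<Sum>k<n. b k))"
  using step
proof (induction n)
  case 0
  then show ?case by simp
next
  case (Suc n)
  have "a (Suc n) \<le> P * a n + b n"
    using Suc.prems by simp
  also have "\<dots> \<le> P * (P ^ n * (a 0 + (\<Sum>k<n. b k))) + P ^ Suc n * b n"
    using Suc P b_nonneg[of n] one_le_power[OF P, of "Suc n"]
    by (intro add_mono mult_left_mono) (auto simp: mult_le_cancel_right1)
  also have "\<dots> = P ^ Suc n * (a 0 + (\<Sum>k<Suc n. b k))"
    by (simp add: algebra_simps)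
  finally show ?case .
qed

lemma bound_nonneg:
  assumes "\<exists>M. \<forall>t\<in>S. \<forall>z. norm (f t z) \<le> M"
  obtains M where "0 \<le> M" and "\<And>t z. t \<in> S \<Longrightarrow> norm (f t z) \<le> M"
  using assms by (metis max.cobounded2 max.coboundedI1)

lemma lipschitz_space_nonneg:
  fixes f :: "real \<Rightarrow> 'a::real_normed_vector \<Rightarrow> 'b::real_normed_vector"
  assumes "\<exists>L. \<forall>t\<in>S. \<forall>s\<in>S. \<forall>z w. norm (f t z - f s w) \<le> L * (\<bar>t - s\<bar> + norm (z - w))"
  obtains L where "0 \<le> L" and "\<And>t z w. t \<in> S \<Longrightarrow> norm (f t z - f t w) \<le> L * norm (z - w)"
proof -
  obtain L0 where L0: "\<forall>t\<in>S. \<forall>s\<in>S. \<forall>z w. norm (f t z - f s w) \<le> L0 * (\<bar>t - s\<bar> + norm (z - w))"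
    using assms by blast
  have "norm (f t z - f t w) \<le> max L0 0 * norm (z - w)" if "t \<in> S" for t z w
  proof -
    have "norm (f t z - f t w) \<le> L0 * norm (z - w)"
      using L0 that by fastforce
    also have "\<dots> \<le> max L0 0 * norm (z - w)"
      by (intro mult_right_mono) auto
    finally show ?thesis .
  qed
  then show ?thesis
    using that[of "max L0 0"] by simp
qed

definition error_constant :: "real \<Rightarrow> real \<Rightarrow> real \<Rightarrow> real" where
  "error_constant M L T = exp (L * T) * (1 + L) * (1 + 3 * T) * (1 + M) + 3 * M + 1"

lemma error_constant_pos:
  assumes "0 \<le> M" "0 \<le> L" "0 \<le> T"
  shows "0 < error_constant M L T"
  using assms unfolding error_constant_def by (simp add: add_pos_nonneg)

lemma error_constant_dominates:
  fixes M L T dt lam u :: real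
  assumes M: "0 \<le> M" and L: "0 \<le> L" and T: "0 \<le> T"
    and dt: "0 < dt" "dt \<le> 1" and lam: "0 < lam" and u: "0 \<le> u"
  shows "exp (L * T) * (M + L * dt * (u + M) + L * T * (3 * M + u / lam)) + (3 * M + u / lam)
    \<le> error_constant M L T * (1 + (1 / lam + dt) * u)"
proof -
  define G where "G = exp (L * T)"
  define C where "C = error_constant M L T"
  have G: "1 \<le> G"
    unfolding G_def using L T by simp
  have poly: "M + L * M + 3 * L * T * M + L + L * T \<le> (1 + L) * (1 + 3 * T) * (1 + M)"
    using M L T by (simp add: algebra_simps)
  have C: "G * (M + L * M + 3 * L * T * M) + 3 * M \<le> C" "G * L \<le> C" "G * L * T + 1 \<le> C"
    using mult_left_mono[OF poly, of G] G M L T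
    unfolding C_def G_def[symmetric] error_constant_def by (simp_all add: algebra_simps)
  have "dt * (L * M) \<le> L * M"
    using L M dt by (intro mult_left_le_one_le) auto
  then have "G * (M + L * dt * (u + M) + L * T * (3 * M + u / lam)) + (3 * M + u / lam)
      \<le> (G * (M + L * M + 3 * L * T * M) + 3 * M) + G * L * (dt * u) + (G * L * T + 1) * (u / lam)"
    using G by (simp add: algebra_simps)
  also have "\<dots> \<le> C + C * (dt * u) + C * (u / lam)"
    using C dt u lam by (intro add_mono mult_right_mono) auto
  also have "\<dots> = C * (1 + (1 / lam + dt) * u)"
    by (simp add: algebra_simps)
  finally show ?thesis
    unfolding G_def C_def .
qed

locale guiding_center_scheme =
  fixes E :: "real \<Rightarrow> real^2 \<Rightarrow> real^2" and T M L dt eps :: real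
    and x v y :: "nat \<Rightarrow> real^2"
  assumes T_nonneg: "0 \<le> T"
    and M_nonneg: "0 \<le> M" and E_bounded: "\<And>t z. t \<in> {0..T} \<Longrightarrow> norm (E t z) \<le> M"
    and L_nonneg: "0 \<le> L"
    and E_lipschitz: "\<And>t z w. t \<in> {0..T} \<Longrightarrow> norm (E t z - E t w) \<le> L * norm (z - w)"
    and dt_pos: "0 < dt" and eps_pos: "0 < eps" and lam_ge_2: "2 \<le> dt / eps\<^sup>2"
    and x_step: "\<And>n. eps *\<^sub>R ((1 / dt) *\<^sub>R (x (Suc n) - x n)) = v (Suc n)"
    and v_step: "\<And>n. eps *\<^sub>R ((1 / dt) *\<^sub>R (v (Suc n) - v n))
          = (1 / eps) *\<^sub>R wedge_e3 (v (Suc n)) + E (real n * dt) (x n)"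
    and y_init: "y 0 = x 0 + eps *\<^sub>R (wedge_e3 (v 0) + eps *\<^sub>R E 0 (x 0))"
    and y_step: "\<And>n. (1 / dt) *\<^sub>R (y (Suc n) - y n) = wedge_e3 (E (real n * dt) (y n))"
begin

definition lam :: real where
  "lam = dt / eps\<^sup>2"

definition w :: "nat \<Rightarrow> real^2" where
  "w n = (1 / eps) *\<^sub>R v n"

definition guiding_center :: "nat \<Rightarrow> real^2" where
  "guiding_center n = x n + eps *\<^sub>R wedge_e3 (v n)"

definition initial_layer :: real where
  "initial_layer = norm (w 0 - wedge_e3 (E 0 (x 0)))"

lemma lam_pos: "0 < lam"
  using lam_ge_2 unfolding lam_def by simp

lemma eps_sq_mult_lam: "eps\<^sup>2 * lam = dt"
  unfolding lam_def using eps_pos by simp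

lemma eps_sq_eq: "eps\<^sup>2 = dt / lam"
  unfolding lam_def using dt_pos eps_pos by simp

lemma time_mono: "real n * dt \<le> T \<Longrightarrow> k \<le> n \<Longrightarrow> real k * dt \<le> T"
  using dt_pos by (smt (verit) mult_right_mono of_nat_le_iff)

lemma time_in_range: "real n * dt \<le> T \<Longrightarrow> real n * dt \<in> {0..T}"
  using dt_pos by simp

lemma x_increment: "x (Suc n) - x n = dt *\<^sub>R w (Suc n)"
proof -
  have "x (Suc n) - x n = (dt / eps) *\<^sub>R (eps *\<^sub>R ((1 / dt) *\<^sub>R (x (Suc n) - x n)))"
    using dt_pos eps_pos by simp
  then show ?thesis
    unfolding x_step w_def by simp
qed

lemma w_implicit_step:
  "w (Suc n) - lam *\<^sub>R wedge_e3 (w (Suc n)) = w n + lam *\<^sub>R E (real n * dt) (x n)"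
proof -
  have "w (Suc n) - w n = (dt / eps\<^sup>2) *\<^sub>R (eps *\<^sub>R ((1 / dt) *\<^sub>R (v (Suc n) - v n)))"
    unfolding w_def using dt_pos eps_pos by (simp add: power2_eq_square algebra_simps)
  also have "\<dots> = lam *\<^sub>R wedge_e3 (w (Suc n)) + lam *\<^sub>R E (real n * dt) (x n)"
    unfolding v_step lam_def w_def by (simp add: wedge_e3_scaleR scaleR_add_right)
  finally show ?thesis
    by (simp add: algebra_simps)
qed

lemma guiding_center_eq: "guiding_center n = x n + eps\<^sup>2 *\<^sub>R wedge_e3 (w n)"
  unfolding guiding_center_def w_def using eps_pos by (simp add: wedge_e3_scaleR power2_eq_square)

lemma guiding_center_increment:
  "guiding_center (Suc n) - guiding_center n = dt *\<^sub>R wedge_e3 (E (real n * dt) (x n))"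
proof -
  have w_diff: "w (Suc n) - w n = lam *\<^sub>R (wedge_e3 (w (Suc n)) + E (real n * dt) (x n))"
    using w_implicit_step[of n] by (simp add: scaleR_add_right algebra_simps)
  have "guiding_center (Suc n) - guiding_center n
      = (x (Suc n) - x n) + eps\<^sup>2 *\<^sub>R wedge_e3 (w (Suc n) - w n)"
    unfolding guiding_center_eq by (simp add: wedge_e3_diff algebra_simps)
  also have "\<dots> = dt *\<^sub>R w (Suc n)
      + (eps\<^sup>2 * lam) *\<^sub>R (wedge_e3 (wedge_e3 (w (Suc n))) + wedge_e3 (E (real n * dt) (x n)))"
    unfolding x_increment w_diff by (simp add: wedge_e3_add wedge_e3_scaleR)
  also have "\<dots> = dt *\<^sub>R wedge_e3 (E (real n * dt) (x n))"
    unfolding eps_sq_mult_lam wedge_e3_wedge_e3 by (simp add: scaleR_add_right scaleR_diff_right)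
  finally show ?thesis .
qed

lemma y_increment: "y (Suc n) - y n = dt *\<^sub>R wedge_e3 (E (real n * dt) (y n))"
proof -
  have "y (Suc n) - y n = dt *\<^sub>R ((1 / dt) *\<^sub>R (y (Suc n) - y n))"
    using dt_pos by simp
  then show ?thesis
    unfolding y_step .
qed

lemma guiding_center_init: "guiding_center 0 - y 0 = - (eps\<^sup>2 *\<^sub>R E 0 (x 0))"
  unfolding guiding_center_def y_init by (simp add: power2_eq_square algebra_simps)

lemma norm_x_minus_y_le_guiding_center: "norm (x n - y n) \<le> norm (guiding_center n - y n) + eps\<^sup>2 * norm (w n)"
proof -
  have "x n - y n = (guiding_center n - y n) - eps\<^sup>2 *\<^sub>R wedge_e3 (w n)"
    unfolding guiding_center_eq by simp
  then have "norm (x n - y n) \<le> norm (guiding_center n - y n) + norm (eps\<^sup>2 *\<^sub>R wedge_e3 (w n))"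
    by (metis norm_triangle_ineq4)
  then show ?thesis
    by (simp add: norm_wedge_e3)
qed

lemma guiding_center_error_step:
  assumes "real n * dt \<le> T"
  shows "norm (guiding_center (Suc n) - y (Suc n))
    \<le> (1 + L * dt) * norm (guiding_center n - y n) + L * dt * eps\<^sup>2 * norm (w n)"
proof -
  let ?t = "real n * dt"
  have "guiding_center (Suc n) - y (Suc n)
      = (guiding_center n - y n) + dt *\<^sub>R wedge_e3 (E ?t (x n) - E ?t (y n))"
    using guiding_center_increment[of n] y_increment[of n]
    by (simp add: wedge_e3_diff algebra_simps)
  then have "norm (guiding_center (Suc n) - y (Suc n))
      \<le> norm (guiding_center n - y n) + norm (dt *\<^sub>R wedge_e3 (E ?t (x n) - E ?t (y n)))"
    by (metis norm_triangle_ineq)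
  also have "\<dots> = norm (guiding_center n - y n) + dt * norm (E ?t (x n) - E ?t (y n))"
    using dt_pos by (simp add: norm_wedge_e3)
  also have "\<dots> \<le> norm (guiding_center n - y n) + dt * (L * norm (x n - y n))"
    using E_lipschitz[OF time_in_range[OF assms]] dt_pos by simp
  also have "\<dots> \<le> norm (guiding_center n - y n)
      + dt * (L * (norm (guiding_center n - y n) + eps\<^sup>2 * norm (w n)))"
    using norm_x_minus_y_le_guiding_center[of n] dt_pos L_nonneg by (simp add: mult_left_mono)
  finally show ?thesis
    by (simp add: algebra_simps)
qed

text \<open>The implicit Lorentz force damps the scaled velocity by the factor \<open>1 / lam\<close>:
  subtracting the steady state \<open>wedge_e3 (E t (x n))\<close> turns the step into
  \<open>q - lam *\<^sub>R wedge_e3 q = p\<close>.\<close>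
lemma norm_w_step_le:
  assumes "real n * dt \<le> T"
  shows "norm (w (Suc n)) \<le> (norm (w n) + M) / lam + M"
proof -
  define F where "F = E (real n * dt) (x n)"
  have F: "norm (wedge_e3 F) \<le> M"
    unfolding F_def norm_wedge_e3 using E_bounded[OF time_in_range[OF assms]] .
  define q where "q = w (Suc n) - wedge_e3 F"
  have "q - lam *\<^sub>R wedge_e3 q = w n - wedge_e3 F"
    using w_implicit_step[of n] unfolding q_def F_def
    by (simp add: wedge_e3_diff wedge_e3_scaleR wedge_e3_wedge_e3 algebra_simps)
  then have "lam * norm q \<le> norm (w n - wedge_e3 F)"
    using lam_pos by (intro wedge_e3_resolvent_norm_le) auto
  also have "\<dots> \<le> norm (w n) + M"
    using norm_triangle_ineq4[of "w n" "wedge_e3 F"] F by simp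
  finally have "norm q \<le> (norm (w n) + M) / lam"
    using lam_pos by (simp add: field_simps)
  moreover have "norm (w (Suc n)) \<le> norm q + M"
    using norm_triangle_ineq[of q "wedge_e3 F"] F unfolding q_def by simp
  ultimately show ?thesis
    by simp
qed

lemma initial_layer_nonneg: "0 \<le> initial_layer"
  unfolding initial_layer_def by simp

lemma norm_w0_le: "norm (w 0) \<le> initial_layer + M"
proof -
  have "norm (w 0) \<le> initial_layer + norm (wedge_e3 (E 0 (x 0)))"
    unfolding initial_layer_def by (metis add.commute norm_triangle_sub)
  moreover have "norm (E 0 (x 0)) \<le> M"
    using E_bounded T_nonneg by simp
  ultimately show ?thesis
    by (simp add: norm_wedge_e3)
qed

lemma norm_w_le:
  assumes "real (Suc k) * dt \<le> T"
  shows "norm (w (Suc k)) \<le> 3 * M + initial_layer / lam"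
proof (rule contracting_recursion_bound[where N = "Suc k"])
  show "norm (w (Suc j)) \<le> (norm (w j) + M) / lam + M" if "j < Suc k" for j
    using that by (intro norm_w_step_le time_mono[OF assms]) auto
qed (use norm_w0_le lam_ge_2 M_nonneg initial_layer_nonneg in \<open>auto simp: lam_def\<close>)

lemma sum_norm_w_le:
  assumes "real n * dt \<le> T"
  shows "(\<Sum>k<n. norm (w k)) \<le> initial_layer + M + real n * (3 * M + initial_layer / lam)"
  using assms
proof (induction n)
  case 0
  then show ?case
    using M_nonneg by (simp add: initial_layer_def)
next
  case (Suc n)
  have nT: "real n * dt \<le> T"
    using time_mono[OF Suc.prems] by simp
  show ?case
  proof (cases n)
    case 0
    then show ?thesis
      using norm_w0_le M_nonneg divide_nonneg_pos[OF initial_layer_nonneg lam_pos] by simp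
  next
    case (Suc k)
    then have "norm (w n) \<le> 3 * M + initial_layer / lam"
      using norm_w_le nT by simp
    then show ?thesis
      using Suc.IH[OF nT] by (simp add: algebra_simps add_divide_distrib)
  qed
qed

lemma guiding_center_error_le:
  assumes nT: "real n * dt \<le> T"
  shows "norm (guiding_center n - y n)
    \<le> exp (L * T) * (eps\<^sup>2 * (M + L * dt * (initial_layer + M) + L * T * (3 * M + initial_layer / lam)))"
proof -
  define A where "A = 3 * M + initial_layer / lam"
  have A: "0 \<le> A"
    unfolding A_def using M_nonneg initial_layer_nonneg lam_pos by simp
  have Ldt: "0 \<le> L * dt"
    using L_nonneg dt_pos by simp
  have "norm (guiding_center n - y n)
      \<le> (1 + L * dt) ^ n * (norm (guiding_center 0 - y 0) + (\<Sum>k<n. L * dt * eps\<^sup>2 * norm (w k)))"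
    by (rule discrete_gronwall[where b = "\<lambda>k. L * dt * eps\<^sup>2 * norm (w k)"])
      (use guiding_center_error_step time_mono[OF nT] Ldt in auto)
  moreover have "(1 + L * dt) ^ n \<le> exp (L * T)"
  proof -
    have "(1 + L * dt) ^ n \<le> exp (real n * (L * dt))"
      using Ldt by (rule one_plus_power_le_exp)
    also have "\<dots> \<le> exp (L * T)"
      using nT L_nonneg by (simp add: mult_left_mono mult.left_commute)
    finally show ?thesis .
  qed
  moreover have "norm (guiding_center 0 - y 0) \<le> eps\<^sup>2 * M"
    unfolding guiding_center_init using E_bounded[of 0 "x 0"] T_nonneg by (simp add: mult_left_mono)
  moreover have "(\<Sum>k<n. L * dt * eps\<^sup>2 * norm (w k)) \<le> eps\<^sup>2 * (L * dt * (initial_layer + M) + L * T * A)"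
  proof -
    have "(\<Sum>k<n. L * dt * eps\<^sup>2 * norm (w k)) \<le> L * dt * eps\<^sup>2 * (initial_layer + M + real n * A)"
      unfolding sum_distrib_left[symmetric] A_def
      using sum_norm_w_le[OF nT] Ldt by (simp add: mult_left_mono)
    also have "\<dots> = eps\<^sup>2 * (L * dt * (initial_layer + M) + L * (real n * dt) * A)"
      by (simp add: algebra_simps)
    also have "\<dots> \<le> eps\<^sup>2 * (L * dt * (initial_layer + M) + L * T * A)"
      using nT L_nonneg A by (simp add: mult_left_mono mult_right_mono)
    finally show ?thesis .
  qed
  moreover have "0 \<le> norm (guiding_center 0 - y 0) + (\<Sum>k<n. L * dt * eps\<^sup>2 * norm (w k))"
    using Ldt by (simp add: sum_nonneg)
  ultimately have "norm (guiding_center n - y n)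
      \<le> exp (L * T) * (eps\<^sup>2 * M + eps\<^sup>2 * (L * dt * (initial_layer + M) + L * T * A))"
    by (smt (verit) mult_mono exp_gt_zero)
  then show ?thesis
    unfolding A_def by (simp add: algebra_simps)
qed

theorem norm_x_minus_y_le:
  assumes "1 \<le> n" and nT: "real n * dt \<le> T" and dt_le_1: "dt \<le> 1"
  shows "norm (x n - y n)
    \<le> error_constant M L T * dt / lam * (1 + (1 / lam + dt) * initial_layer)"
proof -
  obtain k where k: "n = Suc k"
    using \<open>1 \<le> n\<close> by (cases n) auto
  have "norm (x n - y n) \<le> norm (guiding_center n - y n) + eps\<^sup>2 * norm (w n)"
    by (rule norm_x_minus_y_le_guiding_center)
  also have "\<dots> \<le> exp (L * T) * (eps\<^sup>2 * (M + L * dt * (initial_layer + M) + L * T * (3 * M + initial_layer / lam)))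
      + eps\<^sup>2 * (3 * M + initial_layer / lam)"
    using guiding_center_error_le[OF nT] norm_w_le[of k] nT unfolding k by (intro add_mono mult_left_mono) auto
  also have "\<dots> = eps\<^sup>2 * (exp (L * T) * (M + L * dt * (initial_layer + M) + L * T * (3 * M + initial_layer / lam))
      + (3 * M + initial_layer / lam))"
    by (simp add: algebra_simps)
  also have "\<dots> \<le> eps\<^sup>2 * (error_constant M L T * (1 + (1 / lam + dt) * initial_layer))"
    using M_nonneg L_nonneg T_nonneg dt_pos dt_le_1 lam_pos initial_layer_nonneg
    by (intro mult_left_mono error_constant_dominates) auto
  finally show ?thesis
    unfolding eps_sq_eq by (simp add: ac_simps)
qed

end

theorem mainTheorem6:
  fixes T :: real and E :: "real \<Rightarrow> real^2 \<Rightarrow> real^2"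
  assumes T_pos: "T > 0"
    and E_bounded: "\<exists>M. \<forall>t\<in>{0..T}. \<forall>z. norm (E t z) \<le> M"
    and E_lipschitz: "\<exists>L. \<forall>t\<in>{0..T}. \<forall>s\<in>{0..T}. \<forall>z w.
           norm (E t z - E s w) \<le> L * (\<bar>t - s\<bar> + norm (z - w))"
  shows "\<exists>C>0. \<exists>lam0>0. \<forall>(dt::real) (eps::real) (x::nat \<Rightarrow> real^2) (v::nat \<Rightarrow> real^2) (y::nat \<Rightarrow> real^2).
    0 < dt \<longrightarrow> dt \<le> 1 \<longrightarrow> 0 < eps \<longrightarrow> dt / eps^2 \<ge> lam0 \<longrightarrow>
    (\<forall>n. eps *\<^sub>R ((1 / dt) *\<^sub>R (x (Suc n) - x n)) = v (Suc n)) \<longrightarrow>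
    (\<forall>n. eps *\<^sub>R ((1 / dt) *\<^sub>R (v (Suc n) - v n))
          = (1 / eps) *\<^sub>R wedge_e3 (v (Suc n)) + E (real n * dt) (x n)) \<longrightarrow>
    y 0 = x 0 + eps *\<^sub>R (wedge_e3 (v 0) + eps *\<^sub>R E 0 (x 0)) \<longrightarrow>
    (\<forall>n. (1 / dt) *\<^sub>R (y (Suc n) - y n) = wedge_e3 (E (real n * dt) (y n))) \<longrightarrow>
    (\<forall>n. 1 \<le> n \<longrightarrow> real n * dt \<le> T \<longrightarrow>
       norm (x n - y n) \<le> C * dt / (dt / eps^2) *
         (1 + (1 / (dt / eps^2) + dt) *
              norm ((1 / eps) *\<^sub>R v 0 - wedge_e3 (E 0 (x 0)))))"
proof -
  obtain M where M: "0 \<le> M" "\<And>t z. t \<in> {0..T} \<Longrightarrow> norm (E t z) \<le> M"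
    using bound_nonneg[OF E_bounded] by blast
  obtain L where L: "0 \<le> L" "\<And>t z w. t \<in> {0..T} \<Longrightarrow> norm (E t z - E t w) \<le> L * norm (z - w)"
    using lipschitz_space_nonneg[OF E_lipschitz] by blast
  have C_pos: "0 < error_constant M L T"
    using M L T_pos by (intro error_constant_pos) auto
  show ?thesis
  proof (rule exI, rule conjI[OF C_pos], rule exI[of _ 2], rule conjI, simp, intro allI impI)
    fix dt eps :: real and x v y :: "nat \<Rightarrow> real^2" and n :: nat
    assume dt: "0 < dt" "dt \<le> 1" and eps: "0 < eps" "2 \<le> dt / eps\<^sup>2"
      and scheme: "\<forall>n. eps *\<^sub>R ((1 / dt) *\<^sub>R (x (Suc n) - x n)) = v (Suc n)"
      "\<forall>n. eps *\<^sub>R ((1 / dt) *\<^sub>R (v (Suc n) - v n)) = (1 / eps) *\<^sub>R wedge_e3 (v (Suc n)) + E (real n * dt) (x n)"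
      "y 0 = x 0 + eps *\<^sub>R (wedge_e3 (v 0) + eps *\<^sub>R E 0 (x 0))"
      "\<forall>n. (1 / dt) *\<^sub>R (y (Suc n) - y n) = wedge_e3 (E (real n * dt) (y n))"
      and n: "1 \<le> n" "real n * dt \<le> T"
    interpret guiding_center_scheme E T M L dt eps x v y
      using T_pos M L dt(1) eps scheme by unfold_locales simp_all
    show "norm (x n - y n) \<le> error_constant M L T * dt / (dt / eps\<^sup>2)
        * (1 + (1 / (dt / eps\<^sup>2) + dt) * norm ((1 / eps) *\<^sub>R v 0 - wedge_e3 (E 0 (x 0))))"
      using norm_x_minus_y_le[OF n dt(2)] unfolding lam_def initial_layer_def w_def .
  qed
qed

end
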